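(* Let $\beta\in[2/3,1]$. If $f(z)=z+\sum_{n\ge2}a_nz^n$ is analytic on $\mathbb{U}$ and $1+\frac{zf''(z)}{f'(z)}\prec\big(\frac{1+z}{1-z}\big)^\beta$ (i.e. $f$ is strongly convex of order $\beta$), then $$|a_3^2-a_4^2|\le\beta^4+\frac{\beta^2(1+17\beta^2)^2}{324}.$$
   Context: $\mathbb{U}$ is the open unit disk; $\big(\frac{1+z}{1-z}\big)^\beta$ denotes the principal branch. For analytic $f,F$ on $\mathbb{U}$, $f\prec F$ means $f=F\circ\omega$ for some analytic $\omega:\mathbb{U}\to\mathbb{U}$ with $\omega(0)=0$. *)

theory Defs
  imports "HOL-Complex_Analysis.Complex_Analysis"
begin

definition subordinate :: "(complex \<Rightarrow> complex) \<Rightarrow> (complex \<Rightarrow> complex) \<Rightarrow> bool" where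
  "subordinate g F \<longleftrightarrow> g holomorphic_on ball 0 1 \<and> F holomorphic_on ball 0 1 \<and>
     (\<exists>w. w holomorphic_on ball 0 1 \<and> w ` ball 0 1 \<subseteq> ball 0 1 \<and> w 0 = 0 \<and>
          (\<forall>z\<in>ball 0 1. g z = F (w z)))"

definition taylor_coeff :: "(complex \<Rightarrow> complex) \<Rightarrow> nat \<Rightarrow> complex" where
  "taylor_coeff f n = (deriv ^^ n) f 0 / of_nat (fact n)"

end

theory Submission
  imports Defs
begin

text \<open>Write \<open>1 + z f''(z) / f'(z) = F (w z)\<close> with \<open>F z = ((1 + z) / (1 - z)) powr \<beta>\<close> and \<open>w\<close>
  a Schwarz function, \<open>w z = w\<^sub>1 z + w\<^sub>2 z\<^sup>2 + w\<^sub>3 z\<^sup>3 + \<dots>\<close>. The majorant satisfies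
  \<open>(1 - z\<^sup>2) F' = 2 \<beta> F\<close>, which determines its Taylor coefficients, and comparing coefficients gives
  \<open>3 a\<^sub>3 = \<beta> (w\<^sub>2 + 3 \<beta> w\<^sub>1\<^sup>2)\<close> and \<open>6 a\<^sub>4 = \<beta> (w\<^sub>3 + 5 \<beta> w\<^sub>1 w\<^sub>2 + \<nu> w\<^sub>1\<^sup>3)\<close> with
  \<open>\<nu> = (1 + 17 \<beta>\<^sup>2) / 3\<close>. Two steps of the Schur algorithm give Carlson's inequality
  \<open>|(1 - |w\<^sub>1|\<^sup>2) w\<^sub>3 + cnj w\<^sub>1 w\<^sub>2\<^sup>2| \<le> (1 - |w\<^sub>1|\<^sup>2)\<^sup>2 - |w\<^sub>2|\<^sup>2\<close>. It implies
  \<open>|w\<^sub>2| \<le> 1 - |w\<^sub>1|\<^sup>2\<close>, whence \<open>|a\<^sub>3| \<le> \<beta>\<^sup>2\<close>, and, for \<open>\<beta> \<ge> 2/3\<close>, the estimate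
  \<open>|w\<^sub>3 + 5 \<beta> w\<^sub>1 w\<^sub>2 + \<nu> w\<^sub>1\<^sup>3| \<le> \<nu>\<close>, whence \<open>|a\<^sub>4| \<le> \<beta> \<nu> / 6\<close>. Finally
  \<open>|a\<^sub>3\<^sup>2 - a\<^sub>4\<^sup>2| \<le> |a\<^sub>3|\<^sup>2 + |a\<^sub>4|\<^sup>2\<close>.\<close>

lemma has_fps_expansion_fps_expansion_ball:
  assumes "f holomorphic_on ball 0 r" "0 < r"
  shows "f has_fps_expansion fps_expansion f 0"
  using assms by (intro has_fps_expansion_fps_expansion) auto

lemma has_fps_expansion_eq_on_ball:
  fixes f g :: "complex \<Rightarrow> complex"
  assumes "f has_fps_expansion F" "g has_fps_expansion G"
    and "\<forall>z\<in>ball 0 r. f z = g z" "0 < r"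
  shows "F = G"
proof -
  have "eventually (\<lambda>z. z \<in> ball 0 r) (nhds (0::complex))"
    using \<open>0 < r\<close> by (intro eventually_nhds_in_open) auto
  then have "eventually (\<lambda>z. f z = g z) (nhds 0)"
    by eventually_elim (use assms(3) in auto)
  then have "g has_fps_expansion F"
    using has_fps_expansion_cong assms(1) by blast
  then show ?thesis
    using assms(2) by (rule fps_expansion_unique_complex)
qed

section \<open>The Schur algorithm on the unit disc\<close>

lemma Schwarz_factor:
  assumes holw: "w holomorphic_on ball 0 1" and w0: "w 0 = 0"
    and wl: "\<forall>z\<in>ball 0 1. cmod (w z) < 1"
  obtains \<phi> where "\<phi> holomorphic_on ball 0 1" "\<forall>z\<in>ball 0 1. w z = z * \<phi> z"
    "\<forall>z\<in>ball 0 1. cmod (\<phi> z) \<le> 1"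
proof -
  obtain \<phi> where hol\<phi>: "\<phi> holomorphic_on ball 0 1"
    and w\<phi>: "\<And>z. cmod z < 1 \<Longrightarrow> w z = z * \<phi> z" and d0: "deriv w 0 = \<phi> 0"
    using Schwarz3[OF holw w0] by blast
  have wl': "\<And>z. cmod z < 1 \<Longrightarrow> cmod (w z) < 1" using wl by auto
  have "cmod (\<phi> z) \<le> 1" if "z \<in> ball 0 1" for z
  proof (cases "z = 0")
    case True
    then show ?thesis using Schwarz_Lemma(2)[OF holw w0 wl', of 0] d0 by simp
  next
    case False
    have "cmod (w z) \<le> cmod z" using Schwarz_Lemma(1)[OF holw w0 wl', of z] that by simp
    then have "cmod z * cmod (\<phi> z) \<le> cmod z * 1" using w\<phi>[of z] that by (simp add: norm_mult)
    then show ?thesis using False by simp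
  qed
  then show ?thesis using that[of \<phi>] hol\<phi> w\<phi> by auto
qed

lemma unimodular_constant_or_norm_less_1:
  assumes holh: "h holomorphic_on ball 0 1" and hl: "\<forall>z\<in>ball 0 1. cmod (h z) \<le> 1"
  obtains c where "cmod c = 1" "\<forall>z\<in>ball 0 1. h z = c"
    | "\<forall>z\<in>ball 0 1. cmod (h z) < 1"
proof (cases "\<forall>z\<in>ball 0 1. cmod (h z) < 1")
  case False
  then obtain z0 where z0: "z0 \<in> ball 0 1" "cmod (h z0) = 1" using hl by force
  have "h constant_on ball 0 1"
  proof (rule Schwarz2[OF holh, of "1 - cmod z0" z0])
    show "0 < 1 - cmod z0" using z0 by simp
    show "ball z0 (1 - cmod z0) \<subseteq> ball 0 1" using z0 by (simp add: ball_subset_ball_iff)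
    fix z assume "cmod (z0 - z) < 1 - cmod z0"
    then have "z \<in> ball 0 1" using norm_triangle_ineq2[of z z0] by (simp add: norm_minus_commute)
    then show "cmod (h z) \<le> cmod (h z0)" using hl z0 by auto
  qed
  then obtain c where "\<forall>z\<in>ball 0 1. h z = c" unfolding constant_on_def by blast
  with z0 that(1) show ?thesis by auto
qed (use that in blast)

text \<open>\<open>g\<close> is the Schur transform \<open>(h - a) / (z (1 - cnj a h))\<close> of \<open>h\<close>, where \<open>a = h 0\<close>.\<close>

lemma Schur_step:
  fixes h :: "complex \<Rightarrow> complex"
  assumes holh: "h holomorphic_on ball 0 1" and hl: "\<forall>z\<in>ball 0 1. cmod (h z) < 1"
  defines "H \<equiv> fps_expansion h 0" and "\<sigma> \<equiv> complex_of_real (1 - (cmod (h 0))\<^sup>2)"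
  obtains g where "g holomorphic_on ball 0 1" "\<forall>z\<in>ball 0 1. cmod (g z) \<le> 1"
    "fps_nth H 1 = \<sigma> * g 0"
    "fps_nth H 2 = \<sigma> * fps_nth (fps_expansion g 0) 1 - cnj (h 0) * g 0 * fps_nth H 1"
proof -
  define a where "a = h 0"
  have a1: "cmod a < 1" using hl a_def by simp
  define k where "k = (\<lambda>z. Moebius_function 0 a (h z))"
  have "(Moebius_function 0 a \<circ> h) holomorphic_on ball 0 1"
    using hl by (intro holomorphic_on_compose_gen[OF holh Moebius_function_holomorphic[OF a1]]) auto
  then have holk: "k holomorphic_on ball 0 1" unfolding k_def o_def .
  have "k 0 = 0" unfolding k_def a_def by (simp add: Moebius_function_eq_zero)
  moreover have "\<forall>z\<in>ball 0 1. cmod (k z) < 1"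
    unfolding k_def using hl a1 Moebius_function_norm_lt_1 by simp
  ultimately obtain g where holg: "g holomorphic_on ball 0 1"
    and kg: "\<forall>z\<in>ball 0 1. k z = z * g z" and gl: "\<forall>z\<in>ball 0 1. cmod (g z) \<le> 1"
    using Schwarz_factor[OF holk] by blast
  define G where "G = fps_expansion g 0"
  have hH: "h has_fps_expansion H"
    unfolding H_def by (rule has_fps_expansion_fps_expansion_ball[OF holh zero_less_one])
  have gG: "g has_fps_expansion G"
    unfolding G_def by (rule has_fps_expansion_fps_expansion_ball[OF holg zero_less_one])
  have "1 - cnj a * h z \<noteq> 0" if "z \<in> ball 0 1" for z
  proof -
    have "cmod a * cmod (h z) < 1 * 1"
      using a1 hl that by (intro mult_strict_mono') auto
    then have "cmod (cnj a * h z) < 1" by (simp add: norm_mult)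
    then show ?thesis by (metis norm_one order_less_irrefl right_minus_eq)
  qed
  then have "\<forall>z\<in>ball 0 1. k z * (1 - cnj a * h z) = h z - a"
    unfolding k_def Moebius_function_simple by simp
  then have "\<forall>z\<in>ball 0 1. z * g z * (1 - cnj a * h z) = h z - a"
    using kg by simp
  then have eq: "fps_X * G * (1 - fps_const (cnj a) * H) = H - fps_const a"
    by (intro has_fps_expansion_eq_on_ball[of _ _ _ _ 1]) (auto intro!: fps_expansion_intros gG hH)
  have H0: "fps_nth H 0 = a" "fps_nth G 0 = g 0"
    using has_fps_expansion_imp_0_eq_fps_nth_0[OF hH] has_fps_expansion_imp_0_eq_fps_nth_0[OF gG] a_def
    by simp_all
  have "fps_nth (fps_X * G * (1 - fps_const (cnj a) * H)) n = fps_nth (H - fps_const a) n" for n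
    by (simp only: eq)
  from this[of 1] this[of 2]
  have e1: "g 0 * (1 - cnj a * a) = fps_nth H 1"
    and e2: "fps_nth G 1 * (1 - cnj a * a) - g 0 * cnj a * fps_nth H 1 = fps_nth H 2"
    by (simp_all add: fps_mult_nth eval_nat_numeral H0 algebra_simps)
  have ca: "1 - cnj a * a = \<sigma>"
    unfolding \<sigma>_def a_def using complex_norm_square[of "h 0"] by (simp add: mult.commute)
  have "fps_nth H 1 = \<sigma> * g 0" "fps_nth H 2 = \<sigma> * fps_nth G 1 - cnj a * g 0 * fps_nth H 1"
    using e1 e2 unfolding ca by (simp_all add: mult.commute)
  then show ?thesis using that holg gl unfolding G_def a_def by blast
qed

lemma Schwarz_Pick_coeff:
  assumes holh: "h holomorphic_on ball 0 1" and hl: "\<forall>z\<in>ball 0 1. cmod (h z) \<le> 1"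
  shows "cmod (fps_nth (fps_expansion h 0) 1) \<le> 1 - (cmod (h 0))\<^sup>2"
  using holh hl
proof (cases rule: unimodular_constant_or_norm_less_1)
  case (1 c)
  have "h has_fps_expansion fps_expansion h 0"
    by (rule has_fps_expansion_fps_expansion_ball[OF holh zero_less_one])
  then have "fps_expansion h 0 = fps_const c"
    using has_fps_expansion_eq_on_ball[OF _ has_fps_expansion_const, of h _ 1 c] 1 by simp
  then show ?thesis using 1 by simp
next
  case 2
  obtain g where "g holomorphic_on ball 0 1" and gl: "\<forall>z\<in>ball 0 1. cmod (g z) \<le> 1"
    and H1: "fps_nth (fps_expansion h 0) 1 = complex_of_real (1 - (cmod (h 0))\<^sup>2) * g 0"
    and "fps_nth (fps_expansion h 0) 2 = complex_of_real (1 - (cmod (h 0))\<^sup>2) *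
           fps_nth (fps_expansion g 0) 1 - cnj (h 0) * g 0 * fps_nth (fps_expansion h 0) 1"
    by (rule Schur_step[OF holh 2])
  have "(cmod (h 0))\<^sup>2 \<le> 1" using 2 by (simp add: abs_square_le_1 less_imp_le)
  then have "cmod (complex_of_real (1 - (cmod (h 0))\<^sup>2)) = 1 - (cmod (h 0))\<^sup>2"
    by (simp only: norm_of_real abs_of_nonneg diff_ge_0_iff_ge)
  moreover have "cmod (g 0) \<le> 1" using gl by simp
  ultimately show ?thesis unfolding H1 norm_mult using \<open>(cmod (h 0))\<^sup>2 \<le> 1\<close>
    by (simp add: mult_left_le)
qed

lemma Carlson_coeff_ineq:
  assumes holh: "h holomorphic_on ball 0 1" and hl: "\<forall>z\<in>ball 0 1. cmod (h z) < 1"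
  defines "H \<equiv> fps_expansion h 0" and "\<sigma> \<equiv> 1 - (cmod (h 0))\<^sup>2"
  shows "cmod (of_real \<sigma> * fps_nth H 2 + cnj (h 0) * (fps_nth H 1)\<^sup>2)
           \<le> \<sigma>\<^sup>2 - (cmod (fps_nth H 1))\<^sup>2"
proof -
  obtain g where holg: "g holomorphic_on ball 0 1" and gl: "\<forall>z\<in>ball 0 1. cmod (g z) \<le> 1"
    and H1: "fps_nth H 1 = of_real \<sigma> * g 0"
    and H2: "fps_nth H 2
               = of_real \<sigma> * fps_nth (fps_expansion g 0) 1 - cnj (h 0) * g 0 * fps_nth H 1"
    using Schur_step[OF holh hl] unfolding H_def \<sigma>_def by blast
  have "\<sigma> \<ge> 0" using hl unfolding \<sigma>_def by (simp add: abs_square_le_1 less_imp_le)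
  have "of_real \<sigma> * fps_nth H 2 + cnj (h 0) * (fps_nth H 1)\<^sup>2
      = (of_real \<sigma>)\<^sup>2 * fps_nth (fps_expansion g 0) 1"
    unfolding H2 H1 by (simp add: power2_eq_square algebra_simps)
  then have "cmod (of_real \<sigma> * fps_nth H 2 + cnj (h 0) * (fps_nth H 1)\<^sup>2)
      = \<sigma>\<^sup>2 * cmod (fps_nth (fps_expansion g 0) 1)"
    by (simp add: norm_mult norm_power)
  also have "\<dots> \<le> \<sigma>\<^sup>2 * (1 - (cmod (g 0))\<^sup>2)"
    using Schwarz_Pick_coeff[OF holg gl] by (intro mult_left_mono) auto
  also have "\<dots> = \<sigma>\<^sup>2 - (cmod (fps_nth H 1))\<^sup>2"
    unfolding H1 using \<open>\<sigma> \<ge> 0\<close> by (simp add: norm_mult power_mult_distrib algebra_simps)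
  finally show ?thesis .
qed

section \<open>Initial coefficients of Schwarz functions\<close>

text \<open>Carlson's description of the possible initial coefficients \<open>(w\<^sub>1, w\<^sub>2, w\<^sub>3)\<close>
  of a Schwarz function.\<close>

definition schwarz_coeffs :: "complex \<Rightarrow> complex \<Rightarrow> complex \<Rightarrow> bool" where
  "schwarz_coeffs c1 c2 c3 \<longleftrightarrow>
     (cmod c1 = 1 \<and> c2 = 0 \<and> c3 = 0) \<or>
     (cmod c1 < 1 \<and> cmod (of_real (1 - (cmod c1)\<^sup>2) * c3 + cnj c1 * c2\<^sup>2)
                      \<le> (1 - (cmod c1)\<^sup>2)\<^sup>2 - (cmod c2)\<^sup>2)"

lemma schwarz_coeffs_fps_expansion:
  assumes holw: "w holomorphic_on ball 0 1" and w0: "w 0 = 0"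
    and wl: "\<forall>z\<in>ball 0 1. cmod (w z) < 1"
  defines "W \<equiv> fps_expansion w 0"
  shows "schwarz_coeffs (fps_nth W 1) (fps_nth W 2) (fps_nth W 3)"
proof -
  obtain \<phi> where hol\<phi>: "\<phi> holomorphic_on ball 0 1" and w\<phi>: "\<forall>z\<in>ball 0 1. w z = z * \<phi> z"
    and \<phi>1: "\<forall>z\<in>ball 0 1. cmod (\<phi> z) \<le> 1"
    by (rule Schwarz_factor[OF holw w0 wl])
  define \<Phi> where "\<Phi> = fps_expansion \<phi> 0"
  have \<phi>\<Phi>: "\<phi> has_fps_expansion \<Phi>"
    unfolding \<Phi>_def by (rule has_fps_expansion_fps_expansion_ball[OF hol\<phi> zero_less_one])
  have "w has_fps_expansion W"
    unfolding W_def by (rule has_fps_expansion_fps_expansion_ball[OF holw zero_less_one])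
  moreover have "(\<lambda>z. z * \<phi> z) has_fps_expansion fps_X * \<Phi>"
    by (intro fps_expansion_intros \<phi>\<Phi>)
  ultimately have "W = fps_X * \<Phi>"
    using w\<phi> by (rule has_fps_expansion_eq_on_ball) simp
  then have W: "fps_nth W 1 = \<phi> 0" "fps_nth W 2 = fps_nth \<Phi> 1" "fps_nth W 3 = fps_nth \<Phi> 2"
    using has_fps_expansion_imp_0_eq_fps_nth_0[OF \<phi>\<Phi>] by (simp_all add: fps_X_mult_nth)
  show ?thesis
    using hol\<phi> \<phi>1
  proof (cases rule: unimodular_constant_or_norm_less_1)
    case (1 c)
    then have "\<Phi> = fps_const c"
      using has_fps_expansion_eq_on_ball[OF \<phi>\<Phi> has_fps_expansion_const, of 1 c] by simp
    then show ?thesis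
      using 1 unfolding schwarz_coeffs_def W by simp
  next
    case 2
    then show ?thesis
      using Carlson_coeff_ineq[OF hol\<phi> 2] unfolding schwarz_coeffs_def W \<Phi>_def by simp
  qed
qed

lemma schwarz_coeffs_norm_le:
  assumes "schwarz_coeffs c1 c2 c3"
  shows "cmod c2 \<le> 1 - (cmod c1)\<^sup>2"
  using assms unfolding schwarz_coeffs_def
proof (elim disjE conjE)
  assume c1: "cmod c1 < 1"
    and "cmod (of_real (1 - (cmod c1)\<^sup>2) * c3 + cnj c1 * c2\<^sup>2) \<le> (1 - (cmod c1)\<^sup>2)\<^sup>2 - (cmod c2)\<^sup>2"
  then have "(cmod c2)\<^sup>2 \<le> (1 - (cmod c1)\<^sup>2)\<^sup>2"
    using norm_ge_zero[of "of_real (1 - (cmod c1)\<^sup>2) * c3 + cnj c1 * c2\<^sup>2"] by linarith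
  moreover have "0 \<le> 1 - (cmod c1)\<^sup>2" using c1 by (simp add: abs_square_le_1 less_imp_le)
  ultimately show ?thesis by (rule power2_le_imp_le)
qed simp

lemma coeff_functional_core_real:
  fixes p q s \<mu> \<nu> :: real
  assumes pq: "p\<^sup>2 + q\<^sup>2 \<le> 1" and s: "0 \<le> s" "s \<le> 1" and \<mu>: "0 \<le> \<mu>"
    and \<nu>1: "1 + \<mu>\<^sup>2 / 8 \<le> \<nu>" and \<nu>2: "4/3 \<le> \<nu>" and \<nu>3: "(1 + \<mu>)\<^sup>2 \<le> 3 * \<nu>\<^sup>2"
  shows "(1 - s) * ((\<nu> - s * (\<nu> - \<mu> * p + p\<^sup>2 - q\<^sup>2))\<^sup>2 + (s * (2 * p * q - \<mu> * q))\<^sup>2)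
          \<le> (\<nu> - s * (1 - (p\<^sup>2 + q\<^sup>2)))\<^sup>2"
proof -
  define m where "m = 1 - (p\<^sup>2 + q\<^sup>2)"
  define R where "R = \<nu> - \<mu> * p + p\<^sup>2 - q\<^sup>2"
  define I where "I = 2 * p * q - \<mu> * q"
  define c where "c = \<nu>\<^sup>2 + 2 * \<nu> * (R - m)"
  define F where "F = 2 * \<nu>\<^sup>2 + 2 * \<nu> * R - 4 * \<nu> * m + m\<^sup>2 - R\<^sup>2 - I\<^sup>2"
  have "R - m = \<nu> - 1 - \<mu>\<^sup>2 / 8 + 2 * (p - \<mu> / 4)\<^sup>2"
    unfolding R_def m_def by (simp add: power2_eq_square algebra_simps)
  then have "R - m \<ge> 0"
    using \<nu>1 zero_le_power2[of "p - \<mu> / 4"] by linarith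
  then have c: "c \<ge> 0" unfolding c_def using \<nu>2 by simp
  have "p\<^sup>2 \<le> 1" using pq zero_le_power2[of q] by linarith
  then have "-p \<le> 1" by (simp add: abs_square_le_1)
  then have "(p\<^sup>2 + q\<^sup>2) - 2 * \<mu> * p + \<mu>\<^sup>2 \<le> (1 + \<mu>)\<^sup>2"
    using pq mult_left_mono[of "-p" 1 \<mu>] \<mu> by (simp add: power2_eq_square algebra_simps)
  then have "(p\<^sup>2 + q\<^sup>2) * ((p\<^sup>2 + q\<^sup>2) - 2 * \<mu> * p + \<mu>\<^sup>2) \<le> (p\<^sup>2 + q\<^sup>2) * (1 + \<mu>)\<^sup>2"
    by (simp add: mult_left_mono)
  moreover have "F = 3 * \<nu>\<^sup>2 - 4 * \<nu> * m + m\<^sup>2 - (p\<^sup>2 + q\<^sup>2) * ((p\<^sup>2 + q\<^sup>2) - 2 * \<mu> * p + \<mu>\<^sup>2)"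
    unfolding F_def R_def I_def m_def by algebra
  moreover have "3 * \<nu>\<^sup>2 - 4 * \<nu> * m - (p\<^sup>2 + q\<^sup>2) * (1 + \<mu>)\<^sup>2
       = m * (3 * \<nu>\<^sup>2 - 4 * \<nu>) + (p\<^sup>2 + q\<^sup>2) * (3 * \<nu>\<^sup>2 - (1 + \<mu>)\<^sup>2)"
    unfolding m_def by algebra
  moreover have "m * (3 * \<nu>\<^sup>2 - 4 * \<nu>) \<ge> 0"
    using pq \<nu>2 unfolding m_def by (intro mult_nonneg_nonneg) (auto simp: power2_eq_square)
  moreover have "(p\<^sup>2 + q\<^sup>2) * (3 * \<nu>\<^sup>2 - (1 + \<mu>)\<^sup>2) \<ge> 0"
    using \<nu>3 by simp
  ultimately have F: "F \<ge> 0"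
    using zero_le_power2[of m] by linarith
  have "(\<nu> - s * m)\<^sup>2 - (1 - s) * ((\<nu> - s * R)\<^sup>2 + (s * I)\<^sup>2)
     = s * ((1 - s) * (c * (1 - s) + F * s) + s\<^sup>2 * (\<nu> - m)\<^sup>2)"
    unfolding c_def F_def by algebra
  moreover have "s * ((1 - s) * (c * (1 - s) + F * s) + s\<^sup>2 * (\<nu> - m)\<^sup>2) \<ge> 0"
    using s c F by (intro mult_nonneg_nonneg add_nonneg_nonneg) auto
  ultimately show ?thesis unfolding R_def I_def m_def by linarith
qed

lemma coeff_functional_core:
  fixes t :: complex and s \<mu> \<nu> :: real
  assumes t: "cmod t \<le> 1" and s: "0 \<le> s" "s \<le> 1" and \<mu>: "0 \<le> \<mu>"
    and \<nu>: "1 + \<mu>\<^sup>2 / 8 \<le> \<nu>" "4/3 \<le> \<nu>" "(1 + \<mu>)\<^sup>2 \<le> 3 * \<nu>\<^sup>2"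
  shows "sqrt (1 - s) * cmod (\<nu> - s * (\<nu> - \<mu> * t + t\<^sup>2)) \<le> \<nu> - s * (1 - (cmod t)\<^sup>2)"
proof (rule power2_le_imp_le)
  have "(cmod t)\<^sup>2 \<le> 1" using t by (simp add: abs_square_le_1)
  then have "s * (1 - (cmod t)\<^sup>2) \<le> 1 * 1" using s by (intro mult_mono) auto
  then show "0 \<le> \<nu> - s * (1 - (cmod t)\<^sup>2)" using \<nu> by linarith
  have pq: "(cmod t)\<^sup>2 = (Re t)\<^sup>2 + (Im t)\<^sup>2" by (simp add: cmod_power2)
  have "(cmod (\<nu> - s * (\<nu> - \<mu> * t + t\<^sup>2)))\<^sup>2
      = (\<nu> - s * (\<nu> - \<mu> * Re t + (Re t)\<^sup>2 - (Im t)\<^sup>2))\<^sup>2 + (s * (2 * Re t * Im t - \<mu> * Im t))\<^sup>2"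
    unfolding cmod_power2 by (simp add: power2_eq_square algebra_simps)
  then show "(sqrt (1 - s) * cmod (\<nu> - s * (\<nu> - \<mu> * t + t\<^sup>2)))\<^sup>2 \<le> (\<nu> - s * (1 - (cmod t)\<^sup>2))\<^sup>2"
    using coeff_functional_core_real[of "Re t" "Im t" s \<mu> \<nu>] t s \<mu> \<nu> \<open>(cmod t)\<^sup>2 \<le> 1\<close>
    unfolding pq by (simp add: power_mult_distrib)
qed

lemma schwarz_coeffs_functional_le:
  fixes c1 c2 c3 :: complex and \<mu> \<nu> :: real
  assumes c: "schwarz_coeffs c1 c2 c3" and \<mu>: "0 \<le> \<mu>"
    and \<nu>: "1 + \<mu>\<^sup>2 / 8 \<le> \<nu>" "4/3 \<le> \<nu>" "(1 + \<mu>)\<^sup>2 \<le> 3 * \<nu>\<^sup>2"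
  shows "cmod (c3 + \<mu> * c1 * c2 + \<nu> * c1 ^ 3) \<le> \<nu>"
  using c unfolding schwarz_coeffs_def
proof (elim disjE conjE)
  assume "cmod c1 = 1" "c2 = 0" "c3 = 0"
  then show ?thesis using \<nu> by (simp add: norm_mult norm_power)
next
  define x where "x = cmod c1"
  define s where "s = 1 - x\<^sup>2"
  define T where "T = of_real s * c3 + cnj c1 * c2\<^sup>2"
  assume c1: "cmod c1 < 1" and carlson: "cmod (of_real (1 - (cmod c1)\<^sup>2) * c3 + cnj c1 * c2\<^sup>2)
      \<le> (1 - (cmod c1)\<^sup>2)\<^sup>2 - (cmod c2)\<^sup>2"
  have T: "cmod T \<le> s\<^sup>2 - (cmod c2)\<^sup>2" using carlson unfolding T_def s_def x_def .
  have "x\<^sup>2 < 1" using c1 unfolding x_def by (simp add: abs_square_less_1)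
  then have s0: "0 < s" "s \<le> 1" unfolding s_def by auto
  have x: "x = sqrt (1 - s)" unfolding s_def x_def by simp
  define e where "e = (if c1 = 0 then 1 else c1 / of_real x)"
  have e1: "cmod e = 1" unfolding e_def x_def by (simp add: norm_divide)
  have c1e: "c1 = of_real x * e" unfolding e_def x_def by simp
  have "cnj c1 * c1 = of_real x * of_real x"
    unfolding x_def using complex_norm_square[of c1] by (simp add: power2_eq_square mult.commute)
  then have cnje: "cnj c1 * e = of_real x" unfolding e_def by (auto simp: x_def)
  define t where "t = c2 / (of_real s * e\<^sup>2)"
  have c2t: "c2 = of_real s * t * e\<^sup>2" unfolding t_def using s0 e1 by auto
  have c2n: "cmod c2 = s * cmod t" using s0 e1 unfolding c2t by (simp add: norm_mult norm_power)
  moreover have "cmod c2 \<le> s"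
    using schwarz_coeffs_norm_le[OF c] unfolding s_def x_def .
  ultimately have t1: "cmod t \<le> 1" using s0 by simp
  define \<zeta> where "\<zeta> = \<nu> - \<mu> * t + t\<^sup>2"
  have "of_real x ^ 2 = 1 - complex_of_real s" unfolding s_def by simp
  then have ident: "of_real s * (c3 + \<mu> * c1 * c2 + \<nu> * c1 ^ 3)
      = T + of_real s * of_real x * e ^ 3 * (\<nu> - s * \<zeta>)"
    unfolding T_def \<zeta>_def c2t c1e using cnje[unfolded c1e] by algebra
  have "s * cmod (c3 + \<mu> * c1 * c2 + \<nu> * c1 ^ 3)
      = cmod (of_real s * (c3 + \<mu> * c1 * c2 + \<nu> * c1 ^ 3))"
    using s0 by (simp add: norm_mult)
  also have "\<dots> \<le> cmod T + cmod (of_real s * of_real x * e ^ 3 * (\<nu> - s * \<zeta>))"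
    unfolding ident by (rule norm_triangle_ineq)
  also have "\<dots> = cmod T + s * x * cmod (\<nu> - s * \<zeta>)"
    using s0 e1 by (simp add: norm_mult norm_power x_def)
  also have "\<dots> \<le> (s\<^sup>2 - (s * cmod t)\<^sup>2) + s * (\<nu> - s * (1 - (cmod t)\<^sup>2))"
  proof (rule add_mono)
    show "cmod T \<le> s\<^sup>2 - (s * cmod t)\<^sup>2" using T c2n by simp
    show "s * x * cmod (\<nu> - s * \<zeta>) \<le> s * (\<nu> - s * (1 - (cmod t)\<^sup>2))"
      using mult_left_mono[OF coeff_functional_core[OF t1 _ _ \<mu> \<nu>], of s] s0
      unfolding x \<zeta>_def by (simp add: mult.assoc)
  qed
  also have "\<dots> = s * \<nu>" by (simp add: power2_eq_square algebra_simps)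
  finally show ?thesis using s0 by simp
qed

section \<open>Strongly convex functions\<close>

lemma Re_Cayley_pos:
  fixes z :: complex
  assumes "cmod z < 1"
  shows "0 < Re ((1 + z) / (1 - z))"
proof -
  have "(Re z)\<^sup>2 + (Im z)\<^sup>2 < 1"
    using assms by (metis cmod_power2 abs_square_less_1 abs_norm_cancel)
  then have num: "Re (1 + z) * Re (1 - z) + Im (1 + z) * Im (1 - z) > 0"
    by (simp add: power2_eq_square algebra_simps)
  have "1 - z \<noteq> 0" using assms by auto
  then have "(Re (1 - z))\<^sup>2 + (Im (1 - z))\<^sup>2 > 0"
    by (simp add: complex_eq_iff sum_power2_gt_zero_iff)
  then show ?thesis using num unfolding Re_divide by simp
qed

lemma Cayley_powr_holomorphic: "(\<lambda>z. ((1 + z) / (1 - z)) powr s) holomorphic_on ball 0 1"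
proof -
  have "(1 + z) / (1 - z) \<notin> \<real>\<^sub>\<le>\<^sub>0" "1 - z \<noteq> 0" if "z \<in> ball 0 1" for z :: complex
    using that Re_Cayley_pos[of z] by (auto simp: complex_nonpos_Reals_iff)
  then show ?thesis by (intro holomorphic_intros) auto
qed

lemma Cayley_powr_deriv:
  fixes s z :: complex
  assumes "cmod z < 1"
  shows "(1 - z\<^sup>2) * deriv (\<lambda>z. ((1 + z) / (1 - z)) powr s) z = 2 * s * ((1 + z) / (1 - z)) powr s"
proof -
  define u where "u = (1 + z) / (1 - z)"
  have z: "1 - z \<noteq> 0" "1 + z \<noteq> 0" using assms by (auto simp: add_eq_0_iff)
  have factor: "1 - z\<^sup>2 = (1 - z) * (1 + z)" by (simp add: power2_eq_square algebra_simps)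
  have u0: "u \<noteq> 0" using z by (simp add: u_def)
  have "u \<notin> \<real>\<^sub>\<le>\<^sub>0" using Re_Cayley_pos[OF assms] by (simp add: u_def complex_nonpos_Reals_iff)
  moreover have "((\<lambda>z. (1 + z) / (1 - z)) has_field_derivative 2 / (1 - z)\<^sup>2) (at z)"
    using z by (auto intro!: derivative_eq_intros simp: field_simps power2_eq_square)
  ultimately have "((\<lambda>z. ((1 + z) / (1 - z)) powr s) has_field_derivative
      s * u powr (s - 1) * (2 / (1 - z)\<^sup>2)) (at z)"
    unfolding u_def by (rule DERIV_chain2[OF has_field_derivative_powr])
  then have "deriv (\<lambda>z. ((1 + z) / (1 - z)) powr s) z = s * (u powr s / u) * (2 / (1 - z)\<^sup>2)"
    by (simp add: DERIV_imp_deriv powr_diff)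
  then have "(1 - z\<^sup>2) * deriv (\<lambda>z. ((1 + z) / (1 - z)) powr s) z
      = s * (u powr s / u) * ((1 - z\<^sup>2) * (2 / (1 - z)\<^sup>2))"
    by (simp only: ac_simps)
  also have "(1 - z\<^sup>2) * (2 / (1 - z)\<^sup>2) = 2 * u"
    unfolding u_def using z factor by (simp add: power2_eq_square)
  also have "s * (u powr s / u) * (2 * u) = 2 * s * u powr s" using u0 by simp
  finally show ?thesis unfolding u_def .
qed

lemma Cayley_powr_fps_coeffs:
  fixes s :: complex
  defines "F \<equiv> fps_expansion (\<lambda>z. ((1 + z) / (1 - z)) powr s) 0"
  shows "fps_nth F 0 = 1" "fps_nth F 1 = 2 * s" "fps_nth F 2 = 2 * s\<^sup>2"
    "fps_nth F 3 = (2 * s + 4 * s ^ 3) / 3"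
proof -
  have fF: "(\<lambda>z. ((1 + z) / (1 - z)) powr s) has_fps_expansion F"
    unfolding F_def
    by (rule has_fps_expansion_fps_expansion_ball[OF Cayley_powr_holomorphic zero_less_one])
  show F0: "fps_nth F 0 = 1" using has_fps_expansion_imp_0_eq_fps_nth_0[OF fF] by simp
  have "(\<lambda>z. (1 - z ^ 2) * deriv (\<lambda>z. ((1 + z) / (1 - z)) powr s) z) has_fps_expansion
      (1 - fps_X ^ 2) * fps_deriv F"
    by (intro fps_expansion_intros fF)
  moreover have "(\<lambda>z. 2 * s * ((1 + z) / (1 - z)) powr s) has_fps_expansion fps_const (2 * s) * F"
    by (intro fps_expansion_intros fF)
  ultimately have ODE: "(1 - fps_X ^ 2) * fps_deriv F = fps_const (2 * s) * F"
    using Cayley_powr_deriv by (intro has_fps_expansion_eq_on_ball[of _ _ _ _ 1]) auto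
  have c: "fps_nth ((1 - fps_X ^ 2) * fps_deriv F) n = fps_nth (fps_const (2 * s) * F) n" for n
    by (simp only: ODE)
  from c[of 0] c[of 1] c[of 2]
  have "fps_nth F 1 = 2 * s * fps_nth F 0" "2 * fps_nth F 2 = 2 * s * fps_nth F 1"
    "3 * fps_nth F 3 - fps_nth F 1 = 2 * s * fps_nth F 2"
    by (simp_all add: fps_X_power_mult_nth fps_X_power_mult_right_nth algebra_simps
        eval_nat_numeral)
  then show "fps_nth F 1 = 2 * s" "fps_nth F 2 = 2 * s\<^sup>2" "fps_nth F 3 = (2 * s + 4 * s ^ 3) / 3"
    using F0 by (simp_all add: field_simps power2_eq_square power3_eq_cube)
qed

lemma subordination_fps_identity:
  fixes f F w :: "complex \<Rightarrow> complex"
  assumes holf: "f holomorphic_on ball 0 1" and f'nz: "\<forall>z\<in>ball 0 1. deriv f z \<noteq> 0"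
    and holF: "F holomorphic_on ball 0 1" and holw: "w holomorphic_on ball 0 1" and w0: "w 0 = 0"
    and sub: "\<forall>z\<in>ball 0 1. 1 + z * deriv (deriv f) z / deriv f z = F (w z)"
  defines "A \<equiv> fps_expansion f 0"
  shows "fps_deriv A * (fps_compose (fps_expansion F 0) (fps_expansion w 0) - 1)
           = fps_X * fps_deriv (fps_deriv A)"
proof (rule has_fps_expansion_eq_on_ball)
  have fA: "f has_fps_expansion A"
    unfolding A_def by (rule has_fps_expansion_fps_expansion_ball[OF holf zero_less_one])
  have "F has_fps_expansion fps_expansion F 0"
    by (rule has_fps_expansion_fps_expansion_ball[OF holF zero_less_one])
  moreover have wW: "w has_fps_expansion fps_expansion w 0"
    by (rule has_fps_expansion_fps_expansion_ball[OF holw zero_less_one])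
  moreover have "fps_nth (fps_expansion w 0) 0 = 0"
    using has_fps_expansion_imp_0_eq_fps_nth_0[OF wW] w0 by simp
  ultimately have "(F \<circ> w) has_fps_expansion fps_compose (fps_expansion F 0) (fps_expansion w 0)"
    by (rule has_fps_expansion_compose)
  then show "(\<lambda>z. deriv f z * ((F \<circ> w) z - 1)) has_fps_expansion
      fps_deriv A * (fps_compose (fps_expansion F 0) (fps_expansion w 0) - 1)"
    by (intro has_fps_expansion_mult has_fps_expansion_diff has_fps_expansion_deriv
        has_fps_expansion_1 fA)
  show "(\<lambda>z. z * deriv (deriv f) z) has_fps_expansion fps_X * fps_deriv (fps_deriv A)"
    by (intro fps_expansion_intros fA)
  show "\<forall>z\<in>ball 0 1. deriv f z * ((F \<circ> w) z - 1) = z * deriv (deriv f) z"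
    using sub f'nz by (auto simp: field_simps)
qed simp

lemma strongly_convex_fps_coeffs:
  fixes A F W :: "complex fps" and s :: complex
  assumes E: "fps_deriv A * (fps_compose F W - 1) = fps_X * fps_deriv (fps_deriv A)"
    and A1: "fps_nth A 1 = 1" and W0: "fps_nth W 0 = 0"
    and F: "fps_nth F 0 = 1" "fps_nth F 1 = 2 * s" "fps_nth F 2 = 2 * s\<^sup>2"
      "fps_nth F 3 = (2 * s + 4 * s ^ 3) / 3"
  shows "3 * fps_nth A 3 = s * (fps_nth W 2 + 3 * s * (fps_nth W 1)\<^sup>2)"
    "6 * fps_nth A 4 = s * (fps_nth W 3 + 5 * s * fps_nth W 1 * fps_nth W 2
                            + (1 + 17 * s\<^sup>2) / 3 * fps_nth W 1 ^ 3)"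
proof -
  define C where "C = fps_compose F W - 1"
  have C: "fps_nth C 0 = 0" "fps_nth C 1 = 2 * s * fps_nth W 1"
    "fps_nth C 2 = 2 * s * fps_nth W 2 + 2 * s\<^sup>2 * (fps_nth W 1)\<^sup>2"
    and C3: "fps_nth C 3 = 2 * s * fps_nth W 3 + 4 * s\<^sup>2 * fps_nth W 1 * fps_nth W 2
       + fps_nth F 3 * fps_nth W 1 ^ 3"
    unfolding C_def using W0 F(1-3)
    by (simp_all add: fps_compose_nth fps_mult_nth eval_nat_numeral algebra_simps)
  have "3 * fps_nth C 3 = 6 * s * fps_nth W 3 + 12 * s\<^sup>2 * fps_nth W 1 * fps_nth W 2
       + (2 * s + 4 * s ^ 3) * fps_nth W 1 ^ 3"
    unfolding C3 F(4) by (simp add: field_simps)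
  have e: "fps_nth (fps_deriv A * C) n = fps_nth (fps_X * fps_deriv (fps_deriv A)) n" for n
    using E unfolding C_def by simp
  from e[of 1] e[of 2] e[of 3]
  have "fps_nth C 1 = 2 * fps_nth A 2"
    "fps_nth C 2 + 2 * fps_nth A 2 * fps_nth C 1 = 6 * fps_nth A 3"
    "fps_nth C 3 + 2 * fps_nth A 2 * fps_nth C 2 + 3 * fps_nth A 3 * fps_nth C 1 = 12 * fps_nth A 4"
    using A1 C(1)
    by (simp_all add: fps_mult_nth fps_X_mult_nth fps_deriv_nth eval_nat_numeral algebra_simps)
  then show "3 * fps_nth A 3 = s * (fps_nth W 2 + 3 * s * (fps_nth W 1)\<^sup>2)"
    "6 * fps_nth A 4 = s * (fps_nth W 3 + 5 * s * fps_nth W 1 * fps_nth W 2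
                            + (1 + 17 * s\<^sup>2) / 3 * fps_nth W 1 ^ 3)"
    using C \<open>3 * fps_nth C 3 = _\<close>
    by (simp_all add: field_simps power2_eq_square power3_eq_cube) algebra+
qed

lemma strongly_convex_taylor_coeffs:
  fixes f :: "complex \<Rightarrow> complex" and s :: complex
  assumes holf: "f holomorphic_on ball 0 1" and f'0: "deriv f 0 = 1"
    and f'nz: "\<forall>z\<in>ball 0 1. deriv f z \<noteq> 0"
    and sub: "subordinate (\<lambda>z. 1 + z * deriv (deriv f) z / deriv f z)
                          (\<lambda>z. ((1 + z) / (1 - z)) powr s)"
  obtains c1 c2 c3 where "schwarz_coeffs c1 c2 c3"
    "3 * taylor_coeff f 3 = s * (c2 + 3 * s * c1\<^sup>2)"
    "6 * taylor_coeff f 4 = s * (c3 + 5 * s * c1 * c2 + (1 + 17 * s\<^sup>2) / 3 * c1 ^ 3)"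
proof -
  obtain w where holw: "w holomorphic_on ball 0 1" and "w ` ball 0 1 \<subseteq> ball 0 1"
    and w0: "w 0 = 0"
    and w: "\<forall>z\<in>ball 0 1. 1 + z * deriv (deriv f) z / deriv f z = ((1 + w z) / (1 - w z)) powr s"
    using sub unfolding subordinate_def by blast
  then have wl: "\<forall>z\<in>ball 0 1. cmod (w z) < 1" by auto
  define A where "A = fps_expansion f 0"
  define W where "W = fps_expansion w 0"
  have fA: "f has_fps_expansion A"
    unfolding A_def by (rule has_fps_expansion_fps_expansion_ball[OF holf zero_less_one])
  have a: "taylor_coeff f n = fps_nth A n" for n
    unfolding taylor_coeff_def using fps_nth_fps_expansion[OF fA, of n] by simp
  have "w has_fps_expansion W"
    unfolding W_def by (rule has_fps_expansion_fps_expansion_ball[OF holw zero_less_one])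
  then have W0: "fps_nth W 0 = 0" using has_fps_expansion_imp_0_eq_fps_nth_0 w0 by metis
  have "fps_deriv A * (fps_compose (fps_expansion (\<lambda>z. ((1 + z) / (1 - z)) powr s) 0) W - 1)
      = fps_X * fps_deriv (fps_deriv A)"
    unfolding A_def W_def
    by (rule subordination_fps_identity[OF holf f'nz Cayley_powr_holomorphic holw w0 w])
  from strongly_convex_fps_coeffs[OF this _ W0 Cayley_powr_fps_coeffs]
  show ?thesis
    using that[OF schwarz_coeffs_fps_expansion[OF holw w0 wl, folded W_def]]
      fps_nth_fps_expansion[OF fA, of 1] f'0 unfolding a by simp
qed

lemma strongly_convex_coeff_bounds:
  fixes f :: "complex \<Rightarrow> complex" and \<beta> :: real
  assumes \<beta>: "2/3 \<le> \<beta>" and "f holomorphic_on ball 0 1" "deriv f 0 = 1"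
    "\<forall>z\<in>ball 0 1. deriv f z \<noteq> 0"
    "subordinate (\<lambda>z. 1 + z * deriv (deriv f) z / deriv f z)
                 (\<lambda>z. ((1 + z) / (1 - z)) powr (complex_of_real \<beta>))"
  shows "cmod (taylor_coeff f 3) \<le> \<beta>\<^sup>2" "cmod (taylor_coeff f 4) \<le> \<beta> * (1 + 17 * \<beta>\<^sup>2) / 18"
proof -
  define \<nu> where "\<nu> = (1 + 17 * \<beta>\<^sup>2) / 3"
  obtain c1 c2 c3 :: complex where c: "schwarz_coeffs c1 c2 c3"
    and a3: "3 * taylor_coeff f 3 = \<beta> * (c2 + 3 * \<beta> * c1\<^sup>2)"
    and a4: "6 * taylor_coeff f 4 = \<beta> * (c3 + 5 * \<beta> * c1 * c2 + \<nu> * c1 ^ 3)"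
    using strongly_convex_taylor_coeffs[OF assms(2-5)] unfolding \<nu>_def by auto
  have "\<beta>\<^sup>2 \<ge> 4/9" using power_mono[OF \<beta>, of 2] by (simp add: power2_eq_square)
  have "cmod c2 \<le> 1 - (cmod c1)\<^sup>2" by (rule schwarz_coeffs_norm_le[OF c])
  then have "\<beta> * cmod c2 \<le> 3 * \<beta>\<^sup>2 * (1 - (cmod c1)\<^sup>2)"
    using \<beta> mult_mono[of \<beta> "3 * \<beta>\<^sup>2" "cmod c2" "1 - (cmod c1)\<^sup>2"]
    by (simp add: power2_eq_square)
  moreover have "cmod (3 * taylor_coeff f 3) \<le> cmod (\<beta> * c2) + cmod (\<beta> * (3 * \<beta> * c1\<^sup>2))"
    unfolding a3 distrib_left by (rule norm_triangle_ineq)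
  moreover have "cmod (\<beta> * (3 * \<beta> * c1\<^sup>2)) = 3 * \<beta>\<^sup>2 * (cmod c1)\<^sup>2" "cmod (\<beta> * c2) = \<beta> * cmod c2"
    using \<beta> by (simp_all add: norm_mult norm_power power2_eq_square)
  moreover have "cmod (3 * taylor_coeff f 3) = 3 * cmod (taylor_coeff f 3)" by (simp add: norm_mult)
  ultimately show "cmod (taylor_coeff f 3) \<le> \<beta>\<^sup>2"
    by (simp add: algebra_simps)
  have "0 \<le> 5 * \<beta>" "1 + (5 * \<beta>)\<^sup>2 / 8 \<le> \<nu>" "4/3 \<le> \<nu>"
    using \<beta> \<open>\<beta>\<^sup>2 \<ge> 4/9\<close> by (auto simp: \<nu>_def power_mult_distrib)
  moreover have "(1 + 5 * \<beta>)\<^sup>2 \<le> 3 * \<nu>\<^sup>2"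
  proof -
    have "(2/3) * (7/3) \<le> \<beta> * (17 * \<beta> - 9)" using \<beta> by (intro mult_mono) auto
    then have "3/5 * (1 + 5 * \<beta>) \<le> \<nu>" by (simp add: \<nu>_def power2_eq_square algebra_simps)
    then have "(3/5 * (1 + 5 * \<beta>))\<^sup>2 \<le> \<nu>\<^sup>2" using \<beta> by (intro power_mono) auto
    moreover have "(3/5 * (1 + 5 * \<beta>))\<^sup>2 = 9/25 * (1 + 5 * \<beta>)\<^sup>2"
      by (simp add: power2_eq_square algebra_simps)
    ultimately show ?thesis using zero_le_power2[of \<nu>] by linarith
  qed
  ultimately have "cmod (c3 + 5 * \<beta> * c1 * c2 + \<nu> * c1 ^ 3) \<le> \<nu>"
    using schwarz_coeffs_functional_le[OF c, of "5 * \<beta>" \<nu>] by simp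
  then have "cmod (6 * taylor_coeff f 4) \<le> \<beta> * \<nu>"
    unfolding a4 using \<beta> by (simp add: norm_mult mult_left_mono)
  then show "cmod (taylor_coeff f 4) \<le> \<beta> * (1 + 17 * \<beta>\<^sup>2) / 18"
    by (simp add: \<nu>_def norm_mult)
qed

theorem corollary3:
  fixes f :: "complex \<Rightarrow> complex" and \<beta> :: real
  assumes "2/3 \<le> \<beta>" and "\<beta> \<le> 1"
    and "f holomorphic_on ball 0 1"
    and "f 0 = 0" and "deriv f 0 = 1"
    and "\<forall>z\<in>ball 0 1. deriv f z \<noteq> 0"
    and "subordinate (\<lambda>z. 1 + z * deriv (deriv f) z / deriv f z)
                     (\<lambda>z. ((1 + z) / (1 - z)) powr (complex_of_real \<beta>))"
  shows "cmod ((taylor_coeff f 3)\<^sup>2 - (taylor_coeff f 4)\<^sup>2)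
           \<le> \<beta>^4 + \<beta>\<^sup>2 * (1 + 17 * \<beta>\<^sup>2)\<^sup>2 / 324"
proof -
  note bounds = strongly_convex_coeff_bounds[OF assms(1,3,5-7)]
  have "cmod ((taylor_coeff f 3)\<^sup>2 - (taylor_coeff f 4)\<^sup>2)
      \<le> (cmod (taylor_coeff f 3))\<^sup>2 + (cmod (taylor_coeff f 4))\<^sup>2"
    using norm_triangle_ineq4 by (metis norm_power)
  also have "\<dots> \<le> (\<beta>\<^sup>2)\<^sup>2 + (\<beta> * (1 + 17 * \<beta>\<^sup>2) / 18)\<^sup>2"
    using bounds by (intro add_mono power_mono) auto
  also have "\<dots> = \<beta>^4 + \<beta>\<^sup>2 * (1 + 17 * \<beta>\<^sup>2)\<^sup>2 / 324"
    by (simp add: power2_eq_square power4_eq_xxxx field_simps)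
  finally show ?thesis .
qed

end
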